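(* Let $1<n\leq m$ and let $v\in Z_{n,m}$ with $I_c(v)\subseteq[1,m]$ and $\sum_{i\in I_c(v)}v_i=0$. Then $$d(v,0)\leq\sum_{i=1}^{p_l(v)}i+\sum_{i=1}^{m-p_r(v)}i+\lfloor\tfrac{\gamma}{2}\rfloor\lceil\tfrac{\gamma}{2}\rceil,$$ where $\gamma=|I_c(v)|$.
   Context: Elements of $\mathbb{Z}_n$ are identified with representatives in $\{0,\dots,n-1\}$. $Z_{n,m}$ has vertices $u=(u_0,\dots,u_{m+1})\in\mathbb{Z}_n\times\{-1,0,1\}^m\times\mathbb{Z}_n$ with $\sum u_i\equiv0\pmod n$; $u,v$ adjacent if there is $0\leq i\leq m$ with $u_j=v_j$ for $j\notin\{i,i+1\}$ and either ($u_i=v_i+1$, $u_{i+1}=v_{i+1}-1$) or ($u_i=v_i-1$, $u_{i+1}=v_{i+1}+1$), arithmetic in coordinates $0,m+1$ in $\mathbb{Z}_n$. $d$ is graph distance, $0$ the all-zero vertex. $\operatorname{Piv}(v)$ is the set of $-1\le p\le m+1$ with $n\mid\sum_{i=0}^pv_i$ (empty sum $0$). $p_l(v)=\max\{p\in\operatorname{Piv}(v):p<\frac m2\}$, $p_r(v)=\min\{p\in\operatorname{Piv}(v):p\ge\frac m2\}$, $I_c(v)=\{p_l(v)+1,\dots,p_r(v)\}$. *)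

theory Defs
  imports Complex_Main "HOL-Library.Extended_Nat"
begin

text \<open>Vertices of Z_{n,m} are represented as functions nat => int, where
  coordinate i (0 <= i <= m+1) is u_i and all coordinates beyond m+1 are 0.\<close>

definition zvert :: "nat \<Rightarrow> nat \<Rightarrow> (nat \<Rightarrow> int) \<Rightarrow> bool" where
  "zvert n m u \<longleftrightarrow>
     u 0 \<in> {0..int n - 1} \<and> u (m+1) \<in> {0..int n - 1}
     \<and> (\<forall>i\<in>{1..m}. u i \<in> {-1, 0, 1})
     \<and> (\<forall>i>m+1. u i = 0)
     \<and> int n dvd (\<Sum>i\<le>m+1. u i)"

definition zcoord_eq :: "nat \<Rightarrow> nat \<Rightarrow> nat \<Rightarrow> int \<Rightarrow> int \<Rightarrow> bool" where
  "zcoord_eq n m k a b \<longleftrightarrow> (if k = 0 \<or> k = m+1 then a mod int n = b mod int n else a = b)"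

definition zadj :: "nat \<Rightarrow> nat \<Rightarrow> (nat \<Rightarrow> int) \<Rightarrow> (nat \<Rightarrow> int) \<Rightarrow> bool" where
  "zadj n m u v \<longleftrightarrow> zvert n m u \<and> zvert n m v \<and>
     (\<exists>i\<le>m. (\<forall>j\<le>m+1. j \<noteq> i \<and> j \<noteq> i+1 \<longrightarrow> u j = v j) \<and>
        ((zcoord_eq n m i (u i) (v i + 1) \<and> zcoord_eq n m (i+1) (u (i+1)) (v (i+1) - 1)) \<or>
         (zcoord_eq n m i (u i) (v i - 1) \<and> zcoord_eq n m (i+1) (u (i+1)) (v (i+1) + 1))))"

text \<open>Graph distance (infinity if no path).\<close>
definition zdist :: "nat \<Rightarrow> nat \<Rightarrow> (nat \<Rightarrow> int) \<Rightarrow> (nat \<Rightarrow> int) \<Rightarrow> enat" where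
  "zdist n m u v = (INF k\<in>{k. (zadj n m ^^ k) u v}. enat k)"

text \<open>Partial sums: psum v p = sum_{i=0}^p v_i (empty sum for p = -1).\<close>
definition psum :: "(nat \<Rightarrow> int) \<Rightarrow> int \<Rightarrow> int" where
  "psum v p = (\<Sum>i\<in>{0..<nat (p+1)}. v i)"

definition Piv :: "nat \<Rightarrow> nat \<Rightarrow> (nat \<Rightarrow> int) \<Rightarrow> int set" where
  "Piv n m v = {p. -1 \<le> p \<and> p \<le> int m + 1 \<and> int n dvd psum v p}"

definition p_l :: "nat \<Rightarrow> nat \<Rightarrow> (nat \<Rightarrow> int) \<Rightarrow> int" where
  "p_l n m v = Max {p\<in>Piv n m v. real_of_int p < real m / 2}"

definition p_r :: "nat \<Rightarrow> nat \<Rightarrow> (nat \<Rightarrow> int) \<Rightarrow> int" where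
  "p_r n m v = Min {p\<in>Piv n m v. real_of_int p \<ge> real m / 2}"

definition I_c :: "nat \<Rightarrow> nat \<Rightarrow> (nat \<Rightarrow> int) \<Rightarrow> int set" where
  "I_c n m v = {p_l n m v + 1 .. p_r n m v}"

end

theory Submission
  imports Defs
begin

(* Proof idea: a vertex v is the increment sequence of an integer height function w on
   {0..m} with steps of size at most 1; the end coordinates only see w 0 and - w m modulo n.
   Since the partial sums of v at the pivots are divisible by n and the sum over I_c vanishes,
   w can be chosen to vanish at p_l and at p_r. Moving a height of maximal modulus one step
   towards 0 keeps the step condition and is an edge of Z_{n,m}, so d(v,0) is at most the sum
   of the |w i|. By the step condition |w i| is at most the distance from i to p_l (left of the
   midpoint of I_c) or to p_r (right of it), and summing these tents gives the bound. *)

definition vertex_of_heights :: "nat \<Rightarrow> nat \<Rightarrow> (nat \<Rightarrow> int) \<Rightarrow> nat \<Rightarrow> int" where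
  "vertex_of_heights n m w i =
     (if i = 0 then w 0 mod int n
      else if i \<le> m then w i - w (i - 1)
      else if i = m + 1 then (- w m) mod int n
      else 0)"

definition unit_lipschitz :: "nat \<Rightarrow> (nat \<Rightarrow> int) \<Rightarrow> bool" where
  "unit_lipschitz m w \<longleftrightarrow> (\<forall>i\<in>{1..m}. \<bar>w i - w (i - 1)\<bar> \<le> 1)"

lemma sum_vertex_of_heights:
  "k \<le> m \<Longrightarrow> (\<Sum>i\<le>k. vertex_of_heights n m w i) = w 0 mod int n + w k - w 0"
  by (induction k) (simp_all add: vertex_of_heights_def)

lemma zvert_vertex_of_heights:
  assumes "0 < n" "unit_lipschitz m w"
  shows "zvert n m (vertex_of_heights n m w)"
proof -
  have "(\<Sum>i\<le>m+1. vertex_of_heights n m w i) = (w 0 mod int n - w 0) + (w m + (- w m) mod int n)"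
    using sum_vertex_of_heights[of m m n w] by (simp add: vertex_of_heights_def)
  moreover have "int n dvd (x mod int n - x)" for x
    by (metis mod_eq_dvd_iff mod_mod_trivial)
  ultimately have "int n dvd (\<Sum>i\<le>m+1. vertex_of_heights n m w i)"
    by (metis dvd_add diff_minus_eq_add add.commute)
  moreover have "vertex_of_heights n m w i \<in> {-1, 0, 1}" if "i \<in> {1..m}" for i
    using that assms(2) by (force simp: vertex_of_heights_def unit_lipschitz_def)
  ultimately show ?thesis
    using assms(1) by (auto simp: zvert_def vertex_of_heights_def)
qed

lemma zadj_vertex_of_heights_update:
  assumes "0 < n" "unit_lipschitz m w" "unit_lipschitz m (w(i := w i + e))"
    and "i \<le> m" "e = 1 \<or> e = -1"
  shows "zadj n m (vertex_of_heights n m w) (vertex_of_heights n m (w(i := w i + e)))"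
proof -
  let ?u = "vertex_of_heights n m w" and ?u' = "vertex_of_heights n m (w(i := w i + e))"
  have "zcoord_eq n m i (?u i) (?u' i - e)"
    using assms(4) by (auto simp: zcoord_eq_def vertex_of_heights_def mod_simps)
  moreover have "zcoord_eq n m (i+1) (?u (i+1)) (?u' (i+1) + e)"
    using assms(4) by (auto simp: zcoord_eq_def vertex_of_heights_def mod_simps)
  ultimately have
    "(zcoord_eq n m i (?u i) (?u' i + 1) \<and> zcoord_eq n m (i+1) (?u (i+1)) (?u' (i+1) - 1)) \<or>
     (zcoord_eq n m i (?u i) (?u' i - 1) \<and> zcoord_eq n m (i+1) (?u (i+1)) (?u' (i+1) + 1))"
    using assms(5) by auto
  moreover have "\<forall>j\<le>m+1. j \<noteq> i \<and> j \<noteq> i+1 \<longrightarrow> ?u j = ?u' j"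
    by (auto simp: vertex_of_heights_def)
  ultimately show ?thesis
    using assms zvert_vertex_of_heights unfolding zadj_def by blast
qed

lemma unit_lipschitz_shrink_max:
  assumes "unit_lipschitz m w" "i \<le> m" "\<forall>j\<le>m. \<bar>w j\<bar> \<le> \<bar>w i\<bar>"
  shows "unit_lipschitz m (w(i := w i - sgn (w i)))"
  unfolding unit_lipschitz_def
proof
  fix j assume j: "j \<in> {1..m}"
  then have "\<bar>w j - w (j - 1)\<bar> \<le> 1" "\<bar>w j\<bar> \<le> \<bar>w i\<bar>" "\<bar>w (j - 1)\<bar> \<le> \<bar>w i\<bar>"
    using assms unfolding unit_lipschitz_def by auto
  then show "\<bar>(w(i := w i - sgn (w i))) j - (w(i := w i - sgn (w i))) (j - 1)\<bar> \<le> 1"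
    using j by (cases "j = i"; cases "j - 1 = i") (auto simp: sgn_if abs_le_iff)
qed

lemma relpowp_zadj_vertex_of_heights_zero:
  assumes "0 < n" "unit_lipschitz m w" "(\<Sum>j\<le>m. \<bar>w j\<bar>) = int N"
  shows "\<exists>k\<le>N. (zadj n m ^^ k) (vertex_of_heights n m w) (\<lambda>_. 0)"
  using assms(2,3)
proof (induction N arbitrary: w rule: less_induct)
  case (less N)
  have "Max ((\<lambda>j. \<bar>w j\<bar>) ` {..m}) \<in> (\<lambda>j. \<bar>w j\<bar>) ` {..m}"
    by (intro Max_in) auto
  then obtain i where i: "i \<le> m" and "\<bar>w i\<bar> = Max ((\<lambda>j. \<bar>w j\<bar>) ` {..m})"
    by (metis atMost_iff imageE)
  then have max: "\<forall>j\<le>m. \<bar>w j\<bar> \<le> \<bar>w i\<bar>"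
    by simp
  show ?case
  proof (cases "w i = 0")
    case True
    then have "vertex_of_heights n m w = (\<lambda>_. 0)"
      using max by (auto simp: vertex_of_heights_def)
    then show ?thesis by auto
  next
    case False
    define w' where "w' = w(i := w i - sgn (w i))"
    have lip': "unit_lipschitz m w'"
      unfolding w'_def by (rule unit_lipschitz_shrink_max[OF less.prems(1) i max])
    have "zadj n m (vertex_of_heights n m w) (vertex_of_heights n m (w(i := w i + - sgn (w i))))"
      using lip' False i
      by (intro zadj_vertex_of_heights_update[OF assms(1) less.prems(1)]) (auto simp: w'_def sgn_if)
    then have step: "zadj n m (vertex_of_heights n m w) (vertex_of_heights n m w')"
      by (simp add: w'_def)
    have "(\<Sum>j\<in>{..m} - {i}. \<bar>w' j\<bar>) = (\<Sum>j\<in>{..m} - {i}. \<bar>w j\<bar>)"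
      by (intro sum.cong) (auto simp: w'_def)
    moreover have "\<bar>w' i\<bar> + 1 = \<bar>w i\<bar>"
      using False by (auto simp: w'_def sgn_if)
    ultimately have "(\<Sum>j\<le>m. \<bar>w' j\<bar>) + 1 = (\<Sum>j\<le>m. \<bar>w j\<bar>)"
      using i by (simp add: sum.remove[of "{..m}" i])
    then have "N \<ge> 1" "(\<Sum>j\<le>m. \<bar>w' j\<bar>) = int (N - 1)"
      using less.prems(2) sum_nonneg[of "{..m}" "\<lambda>j. \<bar>w' j\<bar>"] by linarith+
    then obtain k where k: "k \<le> N - 1" "(zadj n m ^^ k) (vertex_of_heights n m w') (\<lambda>_. 0)"
      using less.IH[of "N - 1" w'] lip' by auto
    have "(zadj n m ^^ Suc k) (vertex_of_heights n m w) (\<lambda>_. 0)"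
      using step k(2) by (rule relpowp_Suc_I2)
    then show ?thesis
      using k(1) \<open>N \<ge> 1\<close> by (intro exI[of _ "Suc k"]) simp
  qed
qed

lemma zdist_vertex_of_heights_zero_le:
  assumes "0 < n" "unit_lipschitz m w"
  shows "zdist n m (vertex_of_heights n m w) (\<lambda>_. 0) \<le> enat (nat (\<Sum>j\<le>m. \<bar>w j\<bar>))"
proof -
  obtain k where k: "k \<le> nat (\<Sum>j\<le>m. \<bar>w j\<bar>)" "(zadj n m ^^ k) (vertex_of_heights n m w) (\<lambda>_. 0)"
    using relpowp_zadj_vertex_of_heights_zero[OF assms] by (metis nat_0_le sum_nonneg abs_ge_zero)
  have "zdist n m (vertex_of_heights n m w) (\<lambda>_. 0) \<le> enat k"
    unfolding zdist_def using k(2) by (intro INF_lower) simp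
  also have "\<dots> \<le> enat (nat (\<Sum>j\<le>m. \<bar>w j\<bar>))"
    using k(1) by simp
  finally show ?thesis .
qed

lemma unit_lipschitz_dist:
  assumes "unit_lipschitz m w" "i \<le> j" "j \<le> m"
  shows "\<bar>w j - w i\<bar> \<le> int j - int i"
  using assms(2)
proof (induction j rule: dec_induct)
  case (step k)
  then have "Suc k \<in> {1..m}"
    using assms(3) by simp
  then have "\<bar>w (Suc k) - w k\<bar> \<le> 1"
    using assms(1) unfolding unit_lipschitz_def by fastforce
  then show ?case
    using step.IH by linarith
qed simp

lemma double_sum_diff_atLeastLessThan:
  "a \<le> b \<Longrightarrow> 2 * (\<Sum>i\<in>{a..<b}. c - int i) = int (b - a) * (2 * c - int a - int b + 1)"
  by (induction b rule: dec_induct) (simp_all add: algebra_simps)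

lemma sum_abs_le_before_zero:
  assumes "unit_lipschitz m w" "w b = 0" "b \<le> m" "a \<le> b"
  shows "2 * (\<Sum>i\<in>{a..<b}. \<bar>w i\<bar>) \<le> int (b - a) * (int (b - a) + 1)"
proof -
  have "(\<Sum>i\<in>{a..<b}. \<bar>w i\<bar>) \<le> (\<Sum>i\<in>{a..<b}. int b - int i)"
    using unit_lipschitz_dist[OF assms(1) _ assms(3)] assms(2) by (intro sum_mono) force
  then show ?thesis
    using double_sum_diff_atLeastLessThan[OF assms(4), of "int b"] assms(4) by simp
qed

lemma sum_abs_le_after_zero:
  assumes "unit_lipschitz m w" "w a = 0" "b \<le> m + 1" "a \<le> b"
  shows "2 * (\<Sum>i\<in>{a..<b}. \<bar>w i\<bar>) \<le> int (b - a) * (int (b - a) - 1)"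
proof -
  have "(\<Sum>i\<in>{a..<b}. \<bar>w i\<bar>) \<le> (\<Sum>i\<in>{a..<b}. int i - int a)"
    using unit_lipschitz_dist[OF assms(1), of a] assms(2,3) by (intro sum_mono) force
  also have "\<dots> = - (\<Sum>i\<in>{a..<b}. int a - int i)"
    by (simp add: sum_negf[symmetric])
  finally show ?thesis
    using double_sum_diff_atLeastLessThan[OF assms(4), of "int a"] assms(4) by (simp add: algebra_simps)
qed

(* a and b are the two halves of I_c: heights in the left half are bounded by the distance
   to P, in the right half by the distance to R. *)
lemma sum_abs_le_tent:
  assumes "unit_lipschitz m w" "w P = 0" "w R = 0" "P < R" "R \<le> m"
  defines "a \<equiv> (R - P) div 2"
  defines "b \<equiv> R - P - a"
  shows "2 * (\<Sum>i\<le>m. \<bar>w i\<bar>) \<le>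
    int P * (int P + 1) + int (m - R) * (int (m - R) + 1) + 2 * (int a * int b)"
proof -
  let ?f = "\<lambda>i. \<bar>w i\<bar>"
  have ab: "a + b = R - P" "b = a \<or> b = a + 1"
    unfolding a_def b_def using assms(4) by (auto, presburger)
  have "(\<Sum>i\<le>m. ?f i) = sum ?f {0..<m+1}"
    by (rule sum.cong) auto
  also have "\<dots> = sum ?f {0..<P} + sum ?f {P..<m+1}"
    using assms(4,5) by (intro sum.atLeastLessThan_concat[symmetric]) auto
  moreover have "sum ?f {P..<m+1} = sum ?f {P..<P+a+1} + sum ?f {P+a+1..<m+1}"
    using ab assms(4,5) by (intro sum.atLeastLessThan_concat[symmetric]) auto
  moreover have "sum ?f {P+a+1..<m+1} = sum ?f {P+a+1..<R} + sum ?f {R..<m+1}"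
    using ab assms(4,5) by (intro sum.atLeastLessThan_concat[symmetric]) auto
  ultimately have "(\<Sum>i\<le>m. ?f i) =
    sum ?f {0..<P} + sum ?f {P..<P+a+1} + sum ?f {P+a+1..<R} + sum ?f {R..<m+1}"
    by simp
  moreover have "2 * sum ?f {0..<P} \<le> int P * (int P + 1)"
    using sum_abs_le_before_zero[OF assms(1,2), where a = 0] assms(4,5) by simp
  moreover have "2 * sum ?f {P..<P+a+1} \<le> int (a+1) * int a"
    using sum_abs_le_after_zero[OF assms(1,2), of "P+a+1"] ab assms(4,5) by simp
  moreover have "R - (P + a + 1) = b - 1" "1 \<le> b"
    using ab assms(4) by auto
  then have "2 * sum ?f {P+a+1..<R} \<le> (int b - 1) * int b"
    using sum_abs_le_before_zero[OF assms(1,3,5), of "P+a+1"] ab by (simp add: of_nat_diff)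
  moreover have "2 * sum ?f {R..<m+1} \<le> int (m - R + 1) * int (m - R)"
    using sum_abs_le_after_zero[OF assms(1,3), of "m+1"] assms(5) by (simp add: algebra_simps)
  moreover have "int (a+1) * int a + (int b - 1) * int b = 2 * (int a * int b)"
    using ab(2) by (auto simp: algebra_simps)
  ultimately show ?thesis
    by (simp add: algebra_simps)
qed

lemma double_sum_atLeastAtMost_int:
  "2 * (\<Sum>i\<in>{1..int k}. i) = int k * (int k + 1)"
proof -
  have "{1..int k} = int ` {Suc 0..k}"
    by (simp add: image_int_atLeastAtMost)
  then have "(\<Sum>i\<in>{1..int k}. i) = (\<Sum>i\<in>{Suc 0..k}. int i)"
    by (simp add: sum.reindex)
  then show ?thesis
    using double_gauss_sum_from_Suc_0[of k, where 'a = int] by simp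
qed

lemma floor_half_nat: "\<lfloor>real g / 2\<rfloor> = int (g div 2)"
  using floor_divide_of_nat_eq[of g 2] by simp

lemma ceiling_half_nat: "\<lceil>real g / 2\<rceil> = int (g - g div 2)"
  using ceiling_divide_eq_div[of "int g" 2, where 'a = real] by simp

lemma psum_nat: "psum v (int p) = (\<Sum>j\<le>p. v j)"
  by (simp add: psum_def atLeast0LessThan lessThan_Suc_atMost nat_add_distrib)

lemma pivots_of_zvert:
  assumes "zvert n m v"
  shows "p_l n m v \<in> Piv n m v" "p_r n m v \<in> Piv n m v" "p_l n m v < p_r n m v"
proof -
  let ?L = "{p\<in>Piv n m v. real_of_int p < real m / 2}"
  let ?R = "{p\<in>Piv n m v. real_of_int p \<ge> real m / 2}"
  have fin: "finite (Piv n m v)"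
    by (rule finite_subset[of _ "{-1..int m + 1}"]) (auto simp: Piv_def)
  have "-1 \<in> ?L"
    by (simp add: Piv_def psum_def)
  then have "p_l n m v \<in> ?L"
    unfolding p_l_def using fin by (intro Max_in) auto
  moreover have "int n dvd psum v (int (m + 1))"
    unfolding psum_nat using assms by (simp add: zvert_def)
  then have "int (m + 1) \<in> ?R"
    by (simp add: Piv_def)
  then have "p_r n m v \<in> ?R"
    unfolding p_r_def using fin by (intro Min_in) auto
  ultimately show "p_l n m v \<in> Piv n m v" "p_r n m v \<in> Piv n m v" "p_l n m v < p_r n m v"
    by auto
qed

lemma unit_lipschitz_partial_sums:
  assumes "zvert n m v"
  shows "unit_lipschitz m (\<lambda>i. (\<Sum>j\<le>i. v j) - c)"
  unfolding unit_lipschitz_def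
proof
  fix i assume i: "i \<in> {1..m}"
  then obtain k where "i = Suc k"
    by (cases i) auto
  moreover have "v i \<in> {-1, 0, 1}"
    using assms i by (simp add: zvert_def)
  ultimately show "\<bar>((\<Sum>j\<le>i. v j) - c) - ((\<Sum>j\<le>i - 1. v j) - c)\<bar> \<le> 1"
    by auto
qed

lemma mod_diff_dvd_self:
  fixes a d :: int
  assumes "k dvd d" "0 \<le> a" "a < k"
  shows "(a - d) mod k = a"
proof -
  have "(a - d) mod k = a mod k"
    using assms(1) by (simp add: mod_eq_dvd_iff)
  also have "\<dots> = a"
    using assms(2,3) by simp
  finally show ?thesis .
qed

lemma vertex_of_heights_partial_sums:
  assumes "zvert n m v" "int n dvd c"
  shows "vertex_of_heights n m (\<lambda>i. (\<Sum>j\<le>i. v j) - c) = v"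
proof
  fix i
  have v: "v 0 \<in> {0..int n - 1}" "v (m+1) \<in> {0..int n - 1}" "\<forall>i>m+1. v i = 0"
    "int n dvd (\<Sum>i\<le>m+1. v i)"
    using assms(1) unfolding zvert_def by auto
  consider "i = 0" | "1 \<le> i" "i \<le> m" | "i = m + 1" | "m + 1 < i"
    by linarith
  then show "vertex_of_heights n m (\<lambda>i. (\<Sum>j\<le>i. v j) - c) i = v i"
  proof cases
    case 1
    then show ?thesis
      using v(1) assms(2) by (simp add: vertex_of_heights_def mod_diff_dvd_self)
  next
    case 2
    then obtain k where "i = Suc k"
      by (cases i) auto
    then show ?thesis
      using 2 by (simp add: vertex_of_heights_def)
  next
    case 3
    have "vertex_of_heights n m (\<lambda>i. (\<Sum>j\<le>i. v j) - c) i
        = (v (m+1) - ((\<Sum>j\<le>m+1. v j) - c)) mod int n"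
      using 3 by (simp add: vertex_of_heights_def)
    also have "\<dots> = v (m+1)"
      using v(2) dvd_diff[OF v(4) assms(2)] by (intro mod_diff_dvd_self) auto
    finally show ?thesis
      using 3 by simp
  next
    case 4
    then show ?thesis
      using v(3) by (simp add: vertex_of_heights_def)
  qed
qed

lemma obtain_nat_pivots:
  assumes "zvert n m v" "I_c n m v \<subseteq> {1..int m}"
  obtains P R where "p_l n m v = int P" "p_r n m v = int R" "P < R" "R \<le> m"
    and "int n dvd (\<Sum>j\<le>P. v j)"
proof -
  have piv: "p_l n m v \<in> Piv n m v" "p_l n m v < p_r n m v"
    using pivots_of_zvert[OF assms(1)] by auto
  then have "p_l n m v + 1 \<in> I_c n m v" "p_r n m v \<in> I_c n m v"
    by (auto simp: I_c_def)
  then have "0 \<le> p_l n m v" "p_r n m v \<le> int m"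
    using assms(2) by force+
  moreover have "int n dvd (\<Sum>j\<le>nat (p_l n m v). v j)"
    using piv(1) \<open>0 \<le> p_l n m v\<close> by (simp add: Piv_def flip: psum_nat)
  ultimately show ?thesis
    using piv(2) that[of "nat (p_l n m v)" "nat (p_r n m v)"] by auto
qed

lemma vertex_of_heights_vanishing:
  assumes "zvert n m v" "P \<le> R" "int n dvd (\<Sum>j\<le>P. v j)" "(\<Sum>j\<in>{Suc P..R}. v j) = 0"
  obtains w where "unit_lipschitz m w" "vertex_of_heights n m w = v" "w P = 0" "w R = 0"
proof
  let ?w = "\<lambda>i. (\<Sum>j\<le>i. v j) - (\<Sum>j\<le>P. v j)"
  show "unit_lipschitz m ?w"
    using assms(1) by (rule unit_lipschitz_partial_sums)
  show "vertex_of_heights n m ?w = v"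
    using assms(1,3) by (rule vertex_of_heights_partial_sums)
  show "?w P = 0"
    by simp
  have "(\<Sum>j\<le>R. v j) = (\<Sum>j\<le>P. v j) + (\<Sum>j\<in>{Suc P..R}. v j)"
    using assms(2) sum.union_disjoint[of "{..P}" "{P<..R}" v]
    by (fastforce simp: ivl_disj_un_one(3) atLeastSucAtMost_greaterThanAtMost)
  then show "?w R = 0"
    using assms(4) by simp
qed

theorem lemma5p28:
  fixes n m :: nat and v :: "nat \<Rightarrow> int"
  assumes "1 < n" and "n \<le> m"
    and "zvert n m v"
    and "I_c n m v \<subseteq> {1..int m}"
    and "(\<Sum>i\<in>I_c n m v. v (nat i)) = 0"
  shows "zdist n m v (\<lambda>_. 0) \<le>
    enat (nat ((\<Sum>i\<in>{1..p_l n m v}. i) + (\<Sum>i\<in>{1..int m - p_r n m v}. i)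
      + \<lfloor>real (card (I_c n m v)) / 2\<rfloor> * \<lceil>real (card (I_c n m v)) / 2\<rceil>))"
proof -
  obtain P R where PR: "p_l n m v = int P" "p_r n m v = int R" "P < R" "R \<le> m"
    and dvd: "int n dvd (\<Sum>j\<le>P. v j)"
    using obtain_nat_pivots[OF assms(3,4)] .
  have Ic: "I_c n m v = int ` {Suc P..R}"
    using PR by (simp add: I_c_def image_int_atLeastAtMost add.commute)
  have "(\<Sum>j\<in>{Suc P..R}. v j) = 0"
    using assms(5) Ic by (simp add: sum.reindex)
  then obtain w where lip: "unit_lipschitz m w" and vw: "vertex_of_heights n m w = v"
    and zero: "w P = 0" "w R = 0"
    using vertex_of_heights_vanishing[OF assms(3) less_imp_le[OF PR(3)] dvd] by blast
  have "zdist n m v (\<lambda>_. 0) \<le> enat (nat (\<Sum>j\<le>m. \<bar>w j\<bar>))"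
    using zdist_vertex_of_heights_zero_le[of n m w] lip assms(1) vw by simp
  also have "\<dots> \<le> enat (nat ((\<Sum>i\<in>{1..p_l n m v}. i) + (\<Sum>i\<in>{1..int m - p_r n m v}. i)
      + \<lfloor>real (card (I_c n m v)) / 2\<rfloor> * \<lceil>real (card (I_c n m v)) / 2\<rceil>))"
  proof -
    have "card (I_c n m v) = R - P" "int m - p_r n m v = int (m - R)"
      using Ic PR by (simp_all add: card_image)
    then show ?thesis
      using sum_abs_le_tent[OF lip zero PR(3,4)] PR(1)
        double_sum_atLeastAtMost_int[of P] double_sum_atLeastAtMost_int[of "m - R"]
      by (simp add: floor_half_nat ceiling_half_nat del: of_nat_diff) (rule nat_mono, linarith)
  qed
  finally show ?thesis .
qed

end
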